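(* Let $m$ be a positive integer, $1\le i\le m$, and let $G(\mathbf{l})$ be a function of $\mathbf{l}=(l_1,\ldots,l_m)\in\mathbb{Z}^m$. Then, with $D_i$ acting on the variables $(k_1,\ldots,k_{m+1})$, \begin{multline*} D_i \sum_{l_{1}=k_{1}}^{k_{2}} \sum_{l_{2}=k_{2}}^{k_{3}} \cdots \sum_{l_{m}=k_{m}}^{k_{m+1}} G(l_{1},\ldots,l_{m}) \\ = - \frac{1}{2} \Bigg( \sum_{l_1=k_{1}}^{k_2} \cdots \sum_{l_{i-2}=k_{i-2}}^{k_{i-1}} \sum_{l_{i-1}=k_i+1}^{k_{i+1}+1} \sum_{l_{i}=k_i}^{k_{i+1}} \sum_{l_{i+1}=k_{i}-1}^{k_{i+2}} \sum_{l_{i+2}=k_{i+2}}^{k_{i+3}} \cdots \sum_{l_{m}=k_{m}}^{k_{m+1}} D_{i-1} G (\mathbf{l}) \\ + \sum_{l_1=k_{1}}^{k_2} \cdots \sum_{l_{i-2}=k_{i-2}}^{k_{i-1}} \sum_{l_{i-1}=k_{i-1}}^{k_{i}} \sum_{l_{i}=k_{i}}^{k_{i+1}} \sum_{l_{i+1}=k_{i}-1}^{k_{i+1}-1} \sum_{l_{i+2}=k_{i+2}}^{k_{i+3}} \cdots \sum_{l_{m}=k_{m}}^{k_{m+1}} D_{i} G (\mathbf{l}) \Bigg), \end{multline*} where by convention $D_0G(\mathbf{l})=0$ and $D_mG(\mathbf{l})=0$.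
   Context: For a function $H(k_1,\ldots,k_N)$ of $N$ integer variables and $1\le j\le N-1$, $D_jH(k_1,\ldots,k_N)=H(k_1,\ldots,k_N)+H(k_1,\ldots,k_{j-1},k_{j+1}+1,k_j-1,k_{j+2},\ldots,k_N)$. Sums use the convention: $\sum_{i=a}^bf(i)=f(a)+\cdots+f(b)$ if $a\le b$, $0$ if $b=a-1$, and $-f(b+1)-\cdots-f(a-1)$ if $b+1\le a-1$. *)

theory Defs
  imports Main
begin

definition gsum :: "int \<Rightarrow> int \<Rightarrow> (int \<Rightarrow> 'a::ab_group_add) \<Rightarrow> 'a" where
  "gsum a b f = (if a \<le> b then (\<Sum>x\<in>{a..b}. f x) else - (\<Sum>x\<in>{b+1..a-1}. f x))"

fun multisum :: "(int \<times> int) list \<Rightarrow> (int list \<Rightarrow> 'a::ab_group_add) \<Rightarrow> 'a" where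
  "multisum [] G = G []"
| "multisum ((a,b) # rs) G = gsum a b (\<lambda>l. multisum rs (\<lambda>ls. G (l # ls)))"

text \<open>The operator D_j on functions of N = length ks integer variables
  (k_1,...,k_N) = ks!0, ..., ks!(N-1) (1-based j):
  D_j H(k) = H(k) + H(..., k_{j+1}+1, k_j-1, ...), for 1 \<le> j \<le> N-1;
  by the paper's convention D_0 H = 0 and D_N H = 0.\<close>
definition Dop :: "nat \<Rightarrow> (int list \<Rightarrow> 'a::ab_group_add) \<Rightarrow> int list \<Rightarrow> 'a" where
  "Dop j H ks = (if 1 \<le> j \<and> j < length ks
     then H ks + H (ks[j - 1 := ks ! j + 1, j := ks ! (j - 1) - 1])
     else 0)"

end

(*
  Write b = k_i and c = k_(i+1). The transposition in D_i changes only three ranges of the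
  iterated sum: l_(i-1) now runs up to c+1, l_i runs over [c+1, b-1], and l_(i+1) starts at b-1.
  Under the summation convention the sum over [c+1, b-1] is minus the sum over [b, c], and the
  enlarged neighbouring ranges split as [k_(i-1), b] + [b+1, c+1] and [b-1, c-1] + [c, k_(i+2)].
  The two surplus sums run over the range pairs [b+1, c+1] x [b, c] for (l_(i-1), l_i) and
  [b, c] x [b-1, c-1] for (l_i, l_(i+1)); both are invariant under the substitution
  (x, y) -> (y+1, x-1) made by D_(i-1) resp. D_i, so applying that operator to the summand
  doubles them. At i = 1 or i = m the missing neighbour contributes nothing, matching D_0 = D_m = 0.
*)

theory Submission
  imports Defs
begin

lemma sum_int_telescope:
  fixes F :: "int \<Rightarrow> 'a::ab_group_add"
  assumes "a - 1 \<le> b"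
  shows "(\<Sum>x\<in>{a..b}. F (x + 1) - F x) = F (b + 1) - F a"
  using assms
proof (induction b rule: int_ge_induct)
  case (step b)
  then have "{a..b + 1} = insert (b + 1) {a..b}" by auto
  with step show ?case by simp
qed simp

lemma gsum_telescope: "gsum a b (\<lambda>x. F (x + 1) - F x) = F (b + 1) - F a"
  by (simp add: gsum_def sum_int_telescope)

text \<open>Since \<open>gsum\<close> telescopes against every primitive, splitting, reversing and shifting
  ranges reduce to arithmetic on a primitive.\<close>

lemma int_primitive_exists:
  fixes f :: "int \<Rightarrow> 'a::ab_group_add"
  obtains F where "f = (\<lambda>x. F (x + 1) - F x)"
proof
  define F where "F n = (\<Sum>x\<in>{0..<n}. f x) - (\<Sum>x\<in>{n..<0}. f x)" for n
  show "f = (\<lambda>x. F (x + 1) - F x)"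
  proof
    fix x
    show "f x = F (x + 1) - F x"
    proof (cases "0 \<le> x")
      case True
      then have "{0..<x + 1} = insert x {0..<x}" by auto
      with True show ?thesis by (simp add: F_def)
    next
      case False
      then have "{x..<0} = insert x {x + 1..<0}" by auto
      with False show ?thesis by (simp add: F_def)
    qed
  qed
qed

lemma gsum_split: "gsum a b f + gsum (b + 1) c f = gsum a c f"
  by (rule int_primitive_exists[of f]) (simp add: gsum_telescope)

lemma gsum_reverse: "gsum (c + 1) (b - 1) f = - gsum b c f"
  by (rule int_primitive_exists[of f]) (simp add: gsum_telescope)

lemma gsum_shift: "gsum (a + t) (b + t) f = gsum a b (\<lambda>x. f (x + t))"
proof (rule int_primitive_exists[of f])
  fix F assume "f = (\<lambda>x. F (x + 1) - F x)"
  then show ?thesis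
    using gsum_telescope[of a b "\<lambda>x. F (x + t)"] by (simp add: gsum_telescope algebra_simps)
qed

lemma gsum_add: "gsum a b (\<lambda>x. f x + g x) = gsum a b f + gsum a b g"
  by (simp add: gsum_def sum.distrib)

lemma gsum_uminus: "gsum a b (\<lambda>x. - f x) = - gsum a b f"
  by (simp add: gsum_def sum_negf)

lemma gsum_swap:
  "gsum a b (\<lambda>x. gsum c d (\<lambda>y. f x y)) = gsum c d (\<lambda>y. gsum a b (\<lambda>x. f x y))"
  by (simp add: gsum_def sum_negf sum.swap[of _ "{a..b}"] sum.swap[of _ "{b+1..a-1}"])

lemma gsum_swap_shift:
  "gsum a b (\<lambda>x. gsum c d (\<lambda>y. f (y + 1) (x - 1)))
    = gsum (c + 1) (d + 1) (\<lambda>y. gsum (a - 1) (b - 1) (\<lambda>x. f y x))"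
proof -
  have "gsum a b (\<lambda>x. gsum c d (\<lambda>y. f (y + 1) (x - 1)))
      = gsum c d (\<lambda>y. gsum a b (\<lambda>x. f (y + 1) (x - 1)))"
    by (rule gsum_swap)
  also have "\<dots> = gsum (c + 1) (d + 1) (\<lambda>y. gsum a b (\<lambda>x. f y (x - 1)))"
    by (simp add: gsum_shift)
  also have "\<dots> = gsum (c + 1) (d + 1) (\<lambda>y. gsum (a - 1) (b - 1) (\<lambda>x. f y x))"
    by (subst gsum_shift[of "a - 1" 1 "b - 1", simplified]) simp
  finally show ?thesis .
qed

lemma multisum_append:
  "multisum (xs @ ys) G = multisum xs (\<lambda>l. multisum ys (\<lambda>l'. G (l @ l')))"
  by (induction xs arbitrary: G) auto

lemma multisum_cong:
  "(\<And>l. length l = length rs \<Longrightarrow> F l = G l) \<Longrightarrow> multisum rs F = multisum rs G"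
proof (induction rs arbitrary: F G)
  case (Cons r rs)
  obtain a b where r: "r = (a, b)" by fastforce
  show ?case
    unfolding r multisum.simps
    by (intro arg_cong[where f = "gsum a b"] ext Cons.IH) (simp add: Cons.prems)
qed simp

lemma multisum_add: "multisum rs (\<lambda>l. F l + G l) = multisum rs F + multisum rs G"
  by (induction rs arbitrary: F G) (auto simp: gsum_add)

lemma multisum_uminus: "multisum rs (\<lambda>l. - G l) = - multisum rs G"
  by (induction rs arbitrary: G) (auto simp: gsum_uminus)

lemma multisum_update:
  assumes "j < length rs"
  shows "multisum (rs[j := (a, b)]) G
    = multisum (take j rs) (\<lambda>l. gsum a b (\<lambda>x. multisum (drop (Suc j) rs) (\<lambda>l'. G (l @ x # l'))))"
  using assms by (simp add: upd_conv_take_nth_drop multisum_append)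

lemma multisum_update_split:
  assumes "j < length rs"
  shows "multisum (rs[j := (a, b)]) G + multisum (rs[j := (b + 1, c)]) G
    = multisum (rs[j := (a, c)]) G"
  using assms by (simp add: multisum_update multisum_add[symmetric] gsum_split)

lemma multisum_update_reverse:
  assumes "j < length rs"
  shows "multisum (rs[j := (c + 1, b - 1)]) G = - multisum (rs[j := (b, c)]) G"
  using assms by (simp add: multisum_update multisum_uminus[symmetric] gsum_reverse)

lemma multisum_swap_adjacent:
  assumes "Suc j < length rs" and "rs ! j = (a, b)" and "rs ! Suc j = (c, d)"
  shows "multisum rs (\<lambda>l. G (l[j := l ! Suc j + 1, Suc j := l ! j - 1]))
    = multisum (rs[j := (c + 1, d + 1), Suc j := (a - 1, b - 1)]) G"
proof -
  define P Q where "P = take j rs" and "Q = drop (Suc (Suc j)) rs"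
  have lenP: "length P = j" using assms(1) by (simp add: P_def)
  have rs: "rs = P @ (a, b) # (c, d) # Q"
    using assms(1) by (simp add: P_def Q_def Cons_nth_drop_Suc flip: assms(2,3))
  have "multisum rs (\<lambda>l. G (l[j := l ! Suc j + 1, Suc j := l ! j - 1]))
      = multisum P (\<lambda>p. gsum a b (\<lambda>x. gsum c d (\<lambda>y.
          multisum Q (\<lambda>q. G (p @ (y + 1) # (x - 1) # q)))))"
    unfolding rs multisum_append
    by (rule multisum_cong) (simp add: lenP list_update_append nth_append)
  also have "\<dots> = multisum P (\<lambda>p. gsum (c + 1) (d + 1) (\<lambda>y. gsum (a - 1) (b - 1) (\<lambda>x.
          multisum Q (\<lambda>q. G (p @ y # x # q)))))"
    by (rule arg_cong[where f = "multisum P"], rule ext, rule gsum_swap_shift)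
  also have "\<dots> = multisum (rs[j := (c + 1, d + 1), Suc j := (a - 1, b - 1)]) G"
    by (simp add: rs lenP list_update_append multisum_append)
  finally show ?thesis .
qed

lemma multisum_zero: "multisum rs (\<lambda>l. 0) = 0"
  by (induction rs) (auto simp: gsum_def)

lemma multisum_Dop_trivial:
  assumes "j = 0 \<or> length rs \<le> j"
  shows "multisum rs (Dop j G) = 0"
proof -
  have "multisum rs (Dop j G) = multisum rs (\<lambda>l. 0)"
    by (rule multisum_cong) (use assms in \<open>auto simp: Dop_def\<close>)
  then show ?thesis by (simp add: multisum_zero)
qed

lemma multisum_Dop_symmetric:
  fixes G :: "int list \<Rightarrow> 'a::ring_1"
  assumes "Suc j < length rs" and "rs ! j = (x + 1, y + 1)" and "rs ! Suc j = (x, y)"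
  shows "multisum rs (Dop (Suc j) G) = 2 * multisum rs G"
proof -
  have "multisum rs (Dop (Suc j) G)
      = multisum rs (\<lambda>l. G l + G (l[j := l ! Suc j + 1, Suc j := l ! j - 1]))"
    by (rule multisum_cong) (use assms(1) in \<open>simp add: Dop_def\<close>)
  also have "\<dots> = multisum rs G + multisum (rs[j := (x + 1, y + 1), Suc j := (x, y)]) G"
    by (simp add: multisum_add multisum_swap_adjacent[OF assms])
  also have "rs[j := (x + 1, y + 1), Suc j := (x, y)] = rs"
    by (simp flip: assms(2,3))
  finally show ?thesis by (simp add: mult_2)
qed

lemma multisum_extend_left:
  fixes G :: "int list \<Rightarrow> 'a::ring_1"
  assumes "Suc j < length rs" and "rs ! j = (a, b)" and "rs ! Suc j = (b, c)"
  shows "2 * multisum (rs[j := (a, c + 1)]) G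
    = 2 * multisum rs G + multisum (rs[j := (b + 1, c + 1)]) (Dop (Suc j) G)"
proof -
  have "multisum (rs[j := (a, c + 1)]) G
      = multisum rs G + multisum (rs[j := (b + 1, c + 1)]) G"
    using multisum_update_split[of j rs a b G "c + 1"] assms(1) by (simp flip: assms(2))
  moreover have "multisum (rs[j := (b + 1, c + 1)]) (Dop (Suc j) G)
      = 2 * multisum (rs[j := (b + 1, c + 1)]) G"
    using assms by (intro multisum_Dop_symmetric) simp_all
  ultimately show ?thesis by (simp add: distrib_left)
qed

lemma multisum_extend_right:
  fixes G :: "int list \<Rightarrow> 'a::ring_1"
  assumes "Suc j < length rs" and "rs ! j = (b, c)" and "rs ! Suc j = (c, d)"
  shows "2 * multisum (rs[Suc j := (b - 1, d)]) G
    = 2 * multisum rs G + multisum (rs[Suc j := (b - 1, c - 1)]) (Dop (Suc j) G)"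
proof -
  have "multisum (rs[Suc j := (b - 1, d)]) G
      = multisum (rs[Suc j := (b - 1, c - 1)]) G + multisum rs G"
    using multisum_update_split[of "Suc j" rs "b - 1" "c - 1" G d] assms(1) by (simp flip: assms(3))
  moreover have "multisum (rs[Suc j := (b - 1, c - 1)]) (Dop (Suc j) G)
      = 2 * multisum (rs[Suc j := (b - 1, c - 1)]) G"
    using assms by (intro multisum_Dop_symmetric[where x = "b - 1" and y = "c - 1"]) simp_all
  ultimately show ?thesis by (simp add: distrib_left)
qed

text \<open>The updates are ordered so that one statement covers the boundary cases: for \<open>j = 0\<close>
  the update at \<open>j - 1 = 0\<close> is overwritten by the one at \<open>j\<close>, and the update at \<open>Suc j\<close>
  is void when \<open>Suc j = length rs\<close>.\<close>

lemma multisum_Dop_range_identity: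
  fixes G :: "int list \<Rightarrow> 'a::field_char_0"
  assumes "j < length rs" and "rs ! j = (b, c)"
    and "0 < j \<Longrightarrow> rs ! (j - 1) = (a, b)" and "Suc j < length rs \<Longrightarrow> rs ! Suc j = (c, d)"
  shows "multisum rs G
      + multisum (rs[Suc j := (b - 1, d), j - 1 := (a, c + 1), j := (c + 1, b - 1)]) G
    = - (1 / 2) * (multisum (rs[Suc j := (b - 1, d), j - 1 := (b + 1, c + 1)]) (Dop j G)
                   + multisum (rs[Suc j := (b - 1, c - 1)]) (Dop (Suc j) G))"
proof -
  define R where "R = rs[Suc j := (b - 1, d)]"
  define L where "L = R[j - 1 := (a, c + 1), j := (b, c)]"
  have lenR: "length R = length rs" and R_j: "R ! j = (b, c)"
    using assms(1,2) by (simp_all add: R_def)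
  have right: "2 * multisum R G
      = 2 * multisum rs G + multisum (rs[Suc j := (b - 1, c - 1)]) (Dop (Suc j) G)"
  proof (cases "Suc j < length rs")
    case True
    then show ?thesis unfolding R_def using assms by (intro multisum_extend_right) auto
  next
    case False
    then show ?thesis by (simp add: R_def multisum_Dop_trivial list_update_beyond)
  qed
  have left: "2 * multisum L G
      = 2 * multisum R G + multisum (R[j - 1 := (b + 1, c + 1)]) (Dop j G)"
  proof (cases j)
    case 0
    then have "L = R" by (simp add: L_def flip: R_j)
    with 0 show ?thesis by (simp add: multisum_Dop_trivial)
  next
    case (Suc i)
    then have "L = R[i := (a, c + 1)]"
      by (metis L_def R_j diff_Suc_1 list_update_id list_update_swap n_not_Suc_n)
    moreover have "R ! i = (a, b)" using assms(3) Suc by (simp add: R_def)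
    ultimately show ?thesis
      using multisum_extend_left[of i R a b c G] Suc assms(1) lenR R_j by simp
  qed
  have reverse: "multisum (R[j - 1 := (a, c + 1), j := (c + 1, b - 1)]) G = - multisum L G"
    using multisum_update_reverse[of j "R[j - 1 := (a, c + 1)]" c b G] assms(1)
    by (simp add: L_def lenR)
  show ?thesis
    using right left reverse by (simp add: R_def L_def field_simps)
qed

definition chain_ranges :: "int list \<Rightarrow> (int \<times> int) list" where
  "chain_ranges ks = map (\<lambda>p. (ks ! (p - 1), ks ! p)) [1..<length ks]"

lemma length_chain_ranges [simp]: "length (chain_ranges ks) = length ks - 1"
  by (simp add: chain_ranges_def)

lemma nth_chain_ranges [simp]:
  "q < length ks - 1 \<Longrightarrow> chain_ranges ks ! q = (ks ! q, ks ! Suc q)"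
  by (simp add: chain_ranges_def)

lemma chain_ranges_update_adjacent:
  assumes "Suc j < length ks"
  shows "chain_ranges (ks[j := x, Suc j := y])
    = (chain_ranges ks)
        [Suc j := (y, ks ! Suc (Suc j)), j - 1 := (ks ! (j - 1), x), j := (x, y)]"
  using assms by (intro nth_equalityI) (auto simp: nth_list_update)

theorem lemma11:
  fixes m i :: nat and G :: "int list \<Rightarrow> 'a::field_char_0" and ks :: "int list"
  assumes "1 \<le> m" and "1 \<le> i" and "i \<le> m" and "length ks = m + 1"
  shows "Dop i (\<lambda>k. multisum (map (\<lambda>p. (k ! (p - 1), k ! p)) [1..<m + 1]) G) ks
    = - (1 / 2) *
      ( multisum (map (\<lambda>p. if p = i - 1 then (ks ! (i - 1) + 1, ks ! i + 1)
                            else if p = i + 1 then (ks ! (i - 1) - 1, ks ! (i + 1))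
                            else (ks ! (p - 1), ks ! p)) [1..<m + 1]) (Dop (i - 1) G)
      + multisum (map (\<lambda>p. if p = i + 1 then (ks ! (i - 1) - 1, ks ! i - 1)
                            else (ks ! (p - 1), ks ! p)) [1..<m + 1]) (Dop i G))"
proof -
  let "?lhs = - (1 / 2) * (multisum ?L1 _ + multisum ?L2 _)" = ?thesis
  define j where "j = i - 1"
  define rs where "rs = chain_ranges ks"
  let ?b = "ks ! j" and ?c = "ks ! i"
  let ?R = "rs[Suc j := (?b - 1, ks ! Suc i)]"
  have i: "i = Suc j" and len: "length rs = m"
    using assms by (simp_all add: j_def rs_def)
  have rs_nth: "q < m \<Longrightarrow> rs ! q = (ks ! q, ks ! Suc q)" for q
    using assms(4) by (simp add: rs_def)
  have "?lhs = multisum rs G + multisum (chain_ranges (ks[j := ?c + 1, Suc j := ?b - 1])) G"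
    using assms by (simp add: Dop_def rs_def chain_ranges_def i)
  also have "\<dots> = multisum rs G
      + multisum (?R[j - 1 := (ks ! (j - 1), ?c + 1), j := (?c + 1, ?b - 1)]) G"
    using assms by (simp add: rs_def chain_ranges_update_adjacent i)
  also have "\<dots> = - (1 / 2) * (multisum (?R[j - 1 := (?b + 1, ?c + 1)]) (Dop j G)
      + multisum (rs[Suc j := (?b - 1, ?c - 1)]) (Dop (Suc j) G))"
    using assms by (intro multisum_Dop_range_identity) (auto simp: len rs_nth i)
  moreover have "multisum ?L1 (Dop j G) = multisum (?R[j - 1 := (?b + 1, ?c + 1)]) (Dop j G)"
    \<comment> \<open>for \<open>i = 1\<close> the two lists differ, but \<open>D\<^sub>0\<close> vanishes\<close>
  proof (cases "j = 0")
    case False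
    then show ?thesis
      by (intro arg_cong[where f = "\<lambda>rs. multisum rs (Dop j G)"] nth_equalityI)
        (auto simp: len rs_nth nth_list_update i simp del: upt_Suc)
  qed (simp add: multisum_Dop_trivial)
  moreover have "?L2 = rs[Suc j := (?b - 1, ?c - 1)]"
    by (rule nth_equalityI) (auto simp: len rs_nth nth_list_update i simp del: upt_Suc)
  ultimately show ?thesis by (simp add: i)
qed

end
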